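(* Let $c\in K$ and let $P\in W[x]$ be nonzero, written (uniquely) as \[P=\sum_{i=r}^{N}(x-c)^i p_i(\vartheta_c),\qquad p_i\in K[t],\ p_r\neq 0,\ r,N\in\mathbb Z,\] and set $p_j=0$ for $j>N$. Let $s$ be a positive integer. Then $(x-c)^{-s}P$ (product in $W(x)$) lies in $W[x]$ if and only if either $r-s\ge 0$, or, with $m=s-r>0$, \[p_{r+k}(j)=0\quad\text{for all }0\le k\le m-1\text{ and all }0\le j\le m-1-k,\] i.e. $p_r(0)=\dots=p_r(m-1)=0$, $p_{r+1}(0)=\dots=p_{r+1}(m-2)=0$, $\dots$, $p_{r+m-1}(0)=0$.
   Context: $K$ is an algebraically closed field of characteristic $0$. $W[x]$ is the Weyl algebra, the $K$-algebra generated by $x$ and $\partial=d/dx$ with $[x,\partial]=-1$; $W(x)=K(x)[\partial]$. $\vartheta_c=(x-c)\partial$. *)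

theory Defs
  imports "HOL-Computational_Algebra.Computational_Algebra"
begin

type_synonym 'a ratfun = "'a poly fract"

text \<open>Elements of W(x) = K(x)[d]: an element sum_j g_j(x) d^j (coefficients written
  on the left) is represented by the polynomial in d with coefficients g_j.
  Addition is that of polynomials; multiplication is wmult below.\<close>
type_synonym 'a wop = "'a ratfun poly"

definition rderiv :: "'a::{field_char_0,field_gcd} ratfun \<Rightarrow> 'a ratfun" where
  "rderiv f = (case quot_of_fract f of (p, q) \<Rightarrow>
      Fract (pderiv p * q - p * pderiv q) (q * q))"

text \<open>Product in W(x): (a d^i)(b d^j) = sum_k (i choose k) a b^(k) d^(i-k+j).\<close>
definition wmult :: "'a::{field_char_0,field_gcd} wop \<Rightarrow> 'a wop \<Rightarrow> 'a wop" where
  "wmult A B = (\<Sum>i\<le>degree A. \<Sum>k\<le>i. \<Sum>j\<le>degree B.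
      monom (coeff A i * of_nat (i choose k) * (rderiv ^^ k) (coeff B j)) (i - k + j))"

definition wpow :: "'a::{field_char_0,field_gcd} wop \<Rightarrow> nat \<Rightarrow> 'a wop" where
  "wpow A n = (wmult A ^^ n) 1"

definition xc :: "'a::{field_char_0,field_gcd} \<Rightarrow> 'a ratfun" where
  "xc c = Fract [:-c, 1:] 1"

definition wd :: "'a::{field_char_0,field_gcd} wop" where
  "wd = monom 1 1"

definition theta :: "'a::{field_char_0,field_gcd} \<Rightarrow> 'a wop" where
  "theta c = wmult [:xc c:] wd"

definition xc_powi :: "'a::{field_char_0,field_gcd} \<Rightarrow> int \<Rightarrow> 'a wop" where
  "xc_powi c i = [: xc c powi i :]"

definition wpoly_eval :: "'a::{field_char_0,field_gcd} poly \<Rightarrow> 'a wop \<Rightarrow> 'a wop" where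
  "wpoly_eval p A = (\<Sum>k\<le>degree p. wmult [:Fract [:coeff p k:] 1:] (wpow A k))"

definition in_Wx :: "'a::{field_char_0,field_gcd} wop \<Rightarrow> bool" where
  "in_Wx A \<longleftrightarrow> (\<forall>j. coeff A j \<in> range (\<lambda>q. Fract q 1))"

end

theory Submission
  imports Defs "HOL-Combinatorics.Stirling"
begin

(* Write to_fract for the embedding K[x] -> K(x) and S(k,j) for the
   Stirling numbers of the second kind.  The operator (x-c)^t P is analysed coefficient by
   coefficient in d:
   1. theta_c^k = sum_{j<=k} S(k,j) (x-c)^j d^j; hence for q in K[t] one has
      q(theta_c) = sum_j beta_j(q) (x-c)^j d^j with beta_j(q) = sum_k q_k S(k,j).
   2. Since m^k = sum_j S(k,j) m(m-1)...(m-j+1), one gets q(m) = sum_j beta_j(q) m(m-1)...(m-j+1);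
      this system is triangular, so beta_0(q) = ... = beta_{n-1}(q) = 0 iff q(0) = ... = q(n-1) = 0.
   3. The coefficient of d^j in (x-c)^t sum_i (x-c)^i p_i(theta_c) is the Laurent polynomial
      sum_i beta_j(p_i) (x-c)^(i+j+t), which lies in K[x] iff its coefficients at negative
      powers of x-c vanish.
   Together: (x-c)^t P is in W[x] iff p_i(m) = 0 whenever i + m + t < 0 (lemma
   in_Wx_shifted_iff).  The theorem is the case t = -s, after reindexing i = r + k. *)

section \<open>Polynomials inside rational functions\<close>

lemma in_Wx_iff: "in_Wx A \<longleftrightarrow> (\<forall>j. coeff A j \<in> range to_fract)"
  by (simp add: in_Wx_def to_fract_def)

lemma to_fract_power: "to_fract (x ^ n) = to_fract x ^ n"
  by (induct n) auto

lemma to_fract_const_mult: "to_fract [:a:] * to_fract p = to_fract (smult a p)"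
  by (simp only: to_fract_mult[symmetric]) simp

lemma xc_eq: "xc c = to_fract [:-c, 1:]"
  by (simp add: xc_def to_fract_def)

lemma xc_power: "xc c ^ n = to_fract ([:-c, 1:] ^ n)"
  by (simp add: xc_eq to_fract_power)

lemma xc_nonzero: "xc c \<noteq> 0"
  by (simp add: xc_eq)

lemma power_int_nonneg: "n \<ge> 0 \<Longrightarrow> x powi n = x ^ nat n"
  by (metis nat_0_le power_int_of_nat)

text \<open>Substituting x + c turns powers of x - c into monomials; this is how coefficients
  with respect to powers of x - c are read off.\<close>
lemma pcompose_shift_power:
  fixes c :: "'a::comm_ring_1"
  shows "pcompose ([:-c, 1:] ^ n) [:c, 1:] = monom 1 n"
proof -
  have "pcompose ([:-c, 1:] ^ n) [:c, 1:] = pcompose [:-c, 1:] [:c, 1:] ^ n"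
    by (induct n) (simp_all only: power_0 power_Suc pcompose_1 pcompose_mult)
  then show ?thesis by (simp add: pcompose_pCons monom_altdef)
qed

lemma laurent_in_polynomials_iff:
  fixes a :: "'b \<Rightarrow> 'a::{field_char_0,field_gcd}"
  assumes fin: "finite I" and inj: "inj_on e I"
  shows "(\<Sum>i\<in>I. to_fract [:a i:] * xc c powi (e i)) \<in> range to_fract
    \<longleftrightarrow> (\<forall>i\<in>I. e i < 0 \<longrightarrow> a i = 0)"
proof
  assume vanish: "\<forall>i\<in>I. e i < 0 \<longrightarrow> a i = 0"
  have "(\<Sum>i\<in>I. to_fract [:a i:] * xc c powi (e i))
      = to_fract (\<Sum>i\<in>I. if e i < 0 then 0 else [:a i:] * [:-c, 1:] ^ nat (e i))"
    using vanish by (auto simp: power_int_nonneg xc_power to_fract_const_mult intro!: sum.cong)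
  then show "(\<Sum>i\<in>I. to_fract [:a i:] * xc c powi (e i)) \<in> range to_fract"
    by (simp only: rangeI)
next
  assume "(\<Sum>i\<in>I. to_fract [:a i:] * xc c powi (e i)) \<in> range to_fract"
  then obtain Q where Q: "(\<Sum>i\<in>I. to_fract [:a i:] * xc c powi (e i)) = to_fract Q" by auto
  text \<open>Clear denominators by multiplying with (x - c)^M.\<close>
  define M where "M = (\<Sum>i\<in>I. nat (- e i))"
  have M: "e i + int M \<ge> 0" if "i \<in> I" for i
  proof -
    have "nat (- e i) \<le> M" unfolding M_def by (rule member_le_sum) (use fin that in auto)
    then show ?thesis by linarith
  qed
  have "to_fract (Q * [:-c, 1:] ^ M) = (\<Sum>i\<in>I. to_fract [:a i:] * xc c powi (e i)) * xc c ^ M"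
    by (simp only: to_fract_mult xc_power Q)
  also have "\<dots> = (\<Sum>i\<in>I. to_fract [:a i:] * xc c powi (e i + int M))"
    by (simp add: sum_distrib_right power_int_add xc_nonzero mult.assoc flip: power_int_of_nat)
  also have "\<dots> = to_fract (\<Sum>i\<in>I. [:a i:] * [:-c, 1:] ^ nat (e i + int M))"
    using M by (simp add: power_int_nonneg xc_power to_fract_const_mult)
  finally have "Q * [:-c, 1:] ^ M = (\<Sum>i\<in>I. [:a i:] * [:-c, 1:] ^ nat (e i + int M))"
    by (simp only: to_fract_eq_iff)
  then have "pcompose (Q * [:-c, 1:] ^ M) [:c, 1:]
      = pcompose (\<Sum>i\<in>I. [:a i:] * [:-c, 1:] ^ nat (e i + int M)) [:c, 1:]"
    by (rule arg_cong)
  then have shifted: "monom 1 M * pcompose Q [:c, 1:] = (\<Sum>i\<in>I. monom (a i) (nat (e i + int M)))"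
    by (simp add: pcompose_mult pcompose_sum pcompose_smult pcompose_shift_power mult.commute smult_monom)
  show "\<forall>i\<in>I. e i < 0 \<longrightarrow> a i = 0"
  proof (intro ballI impI)
    fix i0 assume i0: "i0 \<in> I" "e i0 < 0"
    have exps: "nat (e i + int M) = nat (e i0 + int M) \<longleftrightarrow> i = i0" if "i \<in> I" for i
    proof
      assume "nat (e i + int M) = nat (e i0 + int M)"
      then have "e i = e i0" using M[OF that] M[OF i0(1)] by linarith
      then show "i = i0" using inj that i0(1) by (auto dest: inj_onD)
    qed simp
    have "a i0 = coeff (\<Sum>i\<in>I. monom (a i) (nat (e i + int M))) (nat (e i0 + int M))"
      using fin i0(1) by (simp add: coeff_sum coeff_monom exps cong: sum.cong)
    also have "\<dots> = 0"
      using i0 M[OF i0(1)] by (simp add: shifted[symmetric] coeff_monom_mult)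
    finally show "a i0 = 0" .
  qed
qed

section \<open>Multiplication in W(x)\<close>

lemma rderiv_to_fract: "rderiv (to_fract p) = to_fract (pderiv p)"
  by (simp add: rderiv_def flip: to_fract_def)

lemma rderiv_iterate_zero: "(rderiv ^^ k) (0::'a::{field_char_0,field_gcd} ratfun) = 0"
  using rderiv_to_fract[of "0::'a poly"] by (induct k) auto

lemma wmult_expand:
  fixes A B :: "'a::{field_char_0,field_gcd} wop"
  assumes "degree A \<le> na" "degree B \<le> nb"
  shows "wmult A B = (\<Sum>i\<le>na. \<Sum>k\<le>i. \<Sum>j\<le>nb.
      monom (coeff A i * of_nat (i choose k) * (rderiv ^^ k) (coeff B j)) (i - k + j))"
proof -
  have inner: "(\<Sum>j\<le>degree B. monom (coeff A i * of_nat (i choose k) * (rderiv ^^ k) (coeff B j)) (i - k + j))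
     = (\<Sum>j\<le>nb. monom (coeff A i * of_nat (i choose k) * (rderiv ^^ k) (coeff B j)) (i - k + j))" for i k
    by (rule sum.mono_neutral_left) (use assms in \<open>auto simp: coeff_eq_0 rderiv_iterate_zero\<close>)
  have "wmult A B = (\<Sum>i\<le>degree A. \<Sum>k\<le>i. \<Sum>j\<le>nb.
      monom (coeff A i * of_nat (i choose k) * (rderiv ^^ k) (coeff B j)) (i - k + j))"
    unfolding wmult_def inner ..
  also have "\<dots> = (\<Sum>i\<le>na. \<Sum>k\<le>i. \<Sum>j\<le>nb.
      monom (coeff A i * of_nat (i choose k) * (rderiv ^^ k) (coeff B j)) (i - k + j))"
    by (rule sum.mono_neutral_left) (use assms in \<open>auto simp: coeff_eq_0\<close>)
  finally show ?thesis .
qed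

lemma wmult_const:
  fixes B :: "'a::{field_char_0,field_gcd} wop"
  shows "wmult [:a:] B = smult a B"
proof -
  have "wmult [:a:] B = (\<Sum>j\<le>degree B. monom (a * coeff B j) j)"
    by (subst wmult_expand[of _ 0 _ "degree B"]) auto
  also have "\<dots> = smult a B"
    by (subst (2) poly_as_sum_of_monoms[symmetric]) (simp add: smult_sum smult_monom)
  finally show ?thesis .
qed

section \<open>Powers of the Euler operator\<close>

lemma theta_monom: "theta c = monom (xc c) 1"
  by (simp add: theta_def wd_def wmult_const smult_monom)

text \<open>Operators of the form sum_{j<=n} f(j) (x-c)^j d^j with constant coefficients f(j);
  they contain all polynomials in theta_c.\<close>
definition euler_diag :: "'a::{field_char_0,field_gcd} \<Rightarrow> nat \<Rightarrow> (nat \<Rightarrow> 'a) \<Rightarrow> 'a wop" where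
  "euler_diag c n f = (\<Sum>j\<le>n. monom (to_fract (smult (f j) ([:-c, 1:] ^ j))) j)"

lemma coeff_euler_diag:
  "coeff (euler_diag c n f) t = (if t \<le> n then to_fract (smult (f t) ([:-c, 1:] ^ t)) else 0)"
  by (simp add: euler_diag_def coeff_sum coeff_monom)

lemma degree_euler_diag: "degree (euler_diag c n f) \<le> n"
  by (rule degree_le) (simp add: coeff_euler_diag)

lemma xc_mult_term: "xc c * to_fract (smult a ([:-c, 1:] ^ j)) = to_fract (smult a ([:-c, 1:] ^ Suc j))"
  unfolding xc_eq to_fract_mult[symmetric] by (simp only: mult_smult_right power_Suc)

lemma xc_rderiv_term:
  "xc c * rderiv (to_fract (smult a ([:-c, 1:] ^ j))) = to_fract (smult (of_nat j * a) ([:-c, 1:] ^ j))"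
proof (cases j)
  case 0 then show ?thesis by (simp add: rderiv_to_fract)
next
  case (Suc n)
  have "pderiv ([:-c, 1:] ^ Suc n) = smult (of_nat (Suc n)) ([:-c, 1:] ^ n)"
    by (simp only: pderiv_power_Suc) (simp add: pderiv_pCons)
  then have "pderiv (smult a ([:-c, 1:] ^ Suc n)) = smult (of_nat (Suc n) * a) ([:-c, 1:] ^ n)"
    by (simp only: pderiv_smult smult_smult mult.commute)
  then show ?thesis by (simp only: Suc rderiv_to_fract xc_mult_term)
qed

text \<open>Left multiplication by theta_c acts on the coefficients f(j) by the recurrence
  f(j) \<mapsto> j f(j) + f(j-1) of the Stirling numbers.\<close>
lemma theta_mult_euler_diag:
  fixes f :: "nat \<Rightarrow> 'a::{field_char_0,field_gcd}"
  assumes f0: "\<forall>j>n. f j = 0"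
  shows "wmult (theta c) (euler_diag c n f)
    = euler_diag c (Suc n) (\<lambda>j. of_nat j * f j + (if j = 0 then 0 else f (j - 1)))"
proof -
  have deg: "degree (theta c) \<le> 1" by (simp add: theta_monom degree_monom_eq xc_nonzero)
  have "wmult (theta c) (euler_diag c n f) =
     (\<Sum>j\<le>n. monom (xc c * to_fract (smult (f j) ([:-c, 1:] ^ j))) (Suc j)) +
     (\<Sum>j\<le>n. monom (xc c * rderiv (to_fract (smult (f j) ([:-c, 1:] ^ j)))) j)"
    by (subst wmult_expand[OF deg degree_euler_diag])
       (simp add: theta_monom coeff_monom coeff_euler_diag numeral_2_eq_2 atMost_Suc sum.distrib)
  also have "\<dots> = (\<Sum>j\<le>n. monom (to_fract (smult (f j) ([:-c, 1:] ^ Suc j))) (Suc j)) +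
     (\<Sum>j\<le>n. monom (to_fract (smult (of_nat j * f j) ([:-c, 1:] ^ j))) j)"
    by (simp only: xc_mult_term xc_rderiv_term)
  also have "\<dots> = euler_diag c (Suc n) (\<lambda>j. of_nat j * f j + (if j = 0 then 0 else f (j - 1)))"
  proof (rule poly_eqI)
    fix t
    show "coeff ((\<Sum>j\<le>n. monom (to_fract (smult (f j) ([:-c, 1:] ^ Suc j))) (Suc j)) +
     (\<Sum>j\<le>n. monom (to_fract (smult (of_nat j * f j) ([:-c, 1:] ^ j))) j)) t =
      coeff (euler_diag c (Suc n) (\<lambda>j. of_nat j * f j + (if j = 0 then 0 else f (j - 1)))) t"
      using f0 by (cases t) (auto simp: coeff_sum coeff_monom coeff_euler_diag smult_add_left not_le)
  qed
  finally show ?thesis .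
qed

lemma Stirling_Suc_left: "Stirling (Suc k) j = j * Stirling k j + (if j = 0 then 0 else Stirling k (j - 1))"
  by (cases j) simp_all

lemma wpow_theta: "wpow (theta c) k = euler_diag c k (\<lambda>j. of_nat (Stirling k j))"
proof (induct k)
  case 0 then show ?case by (simp add: wpow_def euler_diag_def pCons_one)
next
  case (Suc k)
  have "wpow (theta c) (Suc k) = wmult (theta c) (euler_diag c k (\<lambda>j. of_nat (Stirling k j)))"
    by (simp add: wpow_def Suc[symmetric])
  also have "\<dots> = euler_diag c (Suc k) (\<lambda>j. of_nat (Stirling (Suc k) j))"
    by (subst theta_mult_euler_diag)
      (auto simp: Stirling_Suc_left intro!: arg_cong[where f = "euler_diag c (Suc k)"])
  finally show ?case .
qed

text \<open>beta_j(q): the coefficient of (x-c)^j d^j in q(theta_c).\<close>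
definition theta_coeff :: "'a::{field_char_0,field_gcd} poly \<Rightarrow> nat \<Rightarrow> 'a" where
  "theta_coeff q j = (\<Sum>k\<le>degree q. coeff q k * of_nat (Stirling k j))"

lemma coeff_wpoly_eval_theta:
  "coeff (wpoly_eval q (theta c)) j = to_fract (smult (theta_coeff q j) ([:-c, 1:] ^ j))"
proof -
  have "coeff (wpoly_eval q (theta c)) j = (\<Sum>k\<le>degree q. to_fract [:coeff q k:] *
      (if j \<le> k then to_fract (smult (of_nat (Stirling k j)) ([:-c, 1:] ^ j)) else 0))"
    by (simp add: wpoly_eval_def wmult_const wpow_theta coeff_sum coeff_euler_diag to_fract_def)
  also have "\<dots> = (\<Sum>k\<le>degree q. to_fract (smult (coeff q k * of_nat (Stirling k j)) ([:-c, 1:] ^ j)))"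
    by (rule sum.cong) (auto simp: to_fract_const_mult)
  also have "\<dots> = to_fract (smult (theta_coeff q j) ([:-c, 1:] ^ j))"
    by (simp add: theta_coeff_def smult_sum)
  finally show ?thesis .
qed

section \<open>Recovering the values q(0), ..., q(n-1) from the coefficients beta_j(q)\<close>

definition falling :: "nat \<Rightarrow> nat \<Rightarrow> nat" where
  "falling m j = (\<Prod>i<j. m - i)"

lemma falling_Suc: "falling m (Suc j) = falling m j * (m - j)"
  by (simp add: falling_def)

lemma falling_eq_0: "m < j \<Longrightarrow> falling m j = 0"
  unfolding falling_def by (rule prod_zero) (auto intro!: bexI[of _ m])

lemma falling_nonzero: "j \<le> m \<Longrightarrow> falling m j \<noteq> 0"
  unfolding falling_def by auto

lemma falling_rec: "j * falling m j + falling m (Suc j) = m * falling m j"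
proof (cases "j \<le> m")
  case True
  then have "j * falling m j + falling m (Suc j) = (j + (m - j)) * falling m j"
    by (simp add: falling_Suc algebra_simps)
  then show ?thesis using True by simp
next
  case False then show ?thesis by (simp add: falling_eq_0 falling_Suc)
qed

lemma Stirling_falling_sum: "(\<Sum>j\<le>k. Stirling k j * falling m j) = m ^ k"
proof (induct k)
  case 0 then show ?case by (simp add: falling_def)
next
  case (Suc k)
  have first: "(\<Sum>j\<le>Suc k. j * Stirling k j * falling m j) = (\<Sum>j\<le>k. j * Stirling k j * falling m j)"
    by simp
  have second: "(\<Sum>j\<le>Suc k. (if j = 0 then 0 else Stirling k (j - 1)) * falling m j)
      = (\<Sum>j\<le>k. Stirling k j * falling m (Suc j))"
    by (subst sum.atMost_Suc_shift) simp
  have "(\<Sum>j\<le>Suc k. Stirling (Suc k) j * falling m j)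
      = (\<Sum>j\<le>Suc k. j * Stirling k j * falling m j)
        + (\<Sum>j\<le>Suc k. (if j = 0 then 0 else Stirling k (j - 1)) * falling m j)"
    by (simp add: Stirling_Suc_left sum.distrib[symmetric] algebra_simps)
  also have "\<dots> = (\<Sum>j\<le>k. Stirling k j * (j * falling m j + falling m (Suc j)))"
    unfolding first second sum.distrib[symmetric] by (rule sum.cong) (simp_all add: algebra_simps)
  also have "\<dots> = m * (\<Sum>j\<le>k. Stirling k j * falling m j)"
    unfolding falling_rec sum_distrib_left by (simp add: mult_ac)
  finally show ?case by (simp add: Suc)
qed

lemma poly_theta_coeff:
  fixes q :: "'a::{field_char_0,field_gcd} poly"
  assumes "degree q \<le> D"
  shows "poly q (of_nat m) = (\<Sum>j\<le>D. theta_coeff q j * of_nat (falling m j))"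
proof -
  have "(\<Sum>j\<le>D. theta_coeff q j * of_nat (falling m j))
      = (\<Sum>k\<le>degree q. coeff q k * (\<Sum>j\<le>D. of_nat (Stirling k j * falling m j)))"
    by (simp add: theta_coeff_def sum_distrib_left sum_distrib_right algebra_simps sum.swap[of _ "{..D}"])
  also have "\<dots> = (\<Sum>k\<le>degree q. coeff q k * of_nat m ^ k)"
  proof (rule sum.cong)
    fix k assume "k \<in> {..degree q}"
    then have "(\<Sum>j\<le>D. Stirling k j * falling m j) = (\<Sum>j\<le>k. Stirling k j * falling m j)"
      using assms by (intro sum.mono_neutral_right) auto
    then show "coeff q k * (\<Sum>j\<le>D. of_nat (Stirling k j * falling m j)) = coeff q k * of_nat m ^ k"
      by (simp only: Stirling_falling_sum flip: of_nat_sum of_nat_power)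
  qed simp
  finally show ?thesis by (simp add: poly_altdef)
qed

text \<open>The relation q(m) = sum_j beta_j(q) m(m-1)...(m-j+1) is triangular with nonzero
  diagonal, so the first n values of q vanish iff the first n coefficients beta_j(q) do.\<close>
lemma theta_coeff_vanish_iff:
  fixes q :: "'a::{field_char_0,field_gcd} poly"
  shows "(\<forall>j<n. theta_coeff q j = 0) \<longleftrightarrow> (\<forall>m<n. poly q (of_nat m) = 0)"
proof
  assume vanish: "\<forall>j<n. theta_coeff q j = 0"
  show "\<forall>m<n. poly q (of_nat m) = 0"
  proof (intro allI impI)
    fix m assume "m < n"
    then have "theta_coeff q j * of_nat (falling m j) = 0" for j
      using vanish by (cases "j < n") (auto simp: falling_eq_0)
    then have "(\<Sum>j\<le>degree q + m. theta_coeff q j * of_nat (falling m j)) = 0"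
      by (simp only: sum.neutral_const)
    then show "poly q (of_nat m) = 0"
      by (simp only: poly_theta_coeff[of q "degree q + m"] le_add1)
  qed
next
  assume vanish: "\<forall>m<n. poly q (of_nat m) = 0"
  have "j < n \<longrightarrow> theta_coeff q j = 0" for j
  proof (induct j rule: less_induct)
    case (less j)
    show ?case
    proof
      assume "j < n"
      have "0 = poly q (of_nat j)" using vanish \<open>j < n\<close> by simp
      also have "\<dots> = (\<Sum>i\<le>degree q + j. theta_coeff q i * of_nat (falling j i))"
        by (rule poly_theta_coeff) simp
      also have "\<dots> = (\<Sum>i\<le>degree q + j. if i = j then theta_coeff q j * of_nat (falling j j) else 0)"
        by (rule sum.cong) (use less \<open>j < n\<close> in \<open>auto simp: falling_eq_0 elim: linorder_neqE_nat\<close>)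
      also have "\<dots> = theta_coeff q j * of_nat (falling j j)" by simp
      finally show "theta_coeff q j = 0" using falling_nonzero[of j j] by simp
    qed
  qed
  then show "\<forall>j<n. theta_coeff q j = 0" by blast
qed

section \<open>The membership criterion\<close>

lemma coeff_shifted_operator:
  fixes p :: "int \<Rightarrow> 'a::{field_char_0,field_gcd} poly"
  shows "coeff (wmult (xc_powi c t) (\<Sum>i\<in>I. wmult (xc_powi c i) (wpoly_eval (p i) (theta c)))) j
    = (\<Sum>i\<in>I. to_fract [:theta_coeff (p i) j:] * xc c powi (i + int j + t))"
proof -
  have "coeff (wmult (xc_powi c t) (\<Sum>i\<in>I. wmult (xc_powi c i) (wpoly_eval (p i) (theta c)))) j
     = (\<Sum>i\<in>I. xc c powi t * (xc c powi i * to_fract (smult (theta_coeff (p i) j) ([:-c, 1:] ^ j))))"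
    by (simp add: xc_powi_def wmult_const coeff_sum coeff_wpoly_eval_theta sum_distrib_left)
  also have "\<dots> = (\<Sum>i\<in>I. to_fract [:theta_coeff (p i) j:] * xc c powi (i + int j + t))"
    by (simp add: power_int_add xc_nonzero mult_ac flip: xc_power to_fract_const_mult del: to_fract_mult)
  finally show ?thesis .
qed

lemma in_Wx_shifted_iff:
  fixes p :: "int \<Rightarrow> 'a::{field_char_0,field_gcd} poly"
  assumes "finite I"
  shows "in_Wx (wmult (xc_powi c t) (\<Sum>i\<in>I. wmult (xc_powi c i) (wpoly_eval (p i) (theta c))))
    \<longleftrightarrow> (\<forall>i\<in>I. \<forall>m. i + int m + t < 0 \<longrightarrow> poly (p i) (of_nat m) = 0)"
proof -
  have negative_iff: "i + int j + t < 0 \<longleftrightarrow> j < nat (- (i + t))" for i :: int and j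
    by linarith
  have inj: "inj_on (\<lambda>i. i + int j + t) I" for j
    by (simp add: inj_on_def)
  have "in_Wx (wmult (xc_powi c t) (\<Sum>i\<in>I. wmult (xc_powi c i) (wpoly_eval (p i) (theta c))))
      \<longleftrightarrow> (\<forall>j. (\<Sum>i\<in>I. to_fract [:theta_coeff (p i) j:] * xc c powi (i + int j + t)) \<in> range to_fract)"
    unfolding in_Wx_iff coeff_shifted_operator ..
  also have "\<dots> \<longleftrightarrow> (\<forall>j. \<forall>i\<in>I. i + int j + t < 0 \<longrightarrow> theta_coeff (p i) j = 0)"
    by (simp only: laurent_in_polynomials_iff[OF assms inj])
  also have "\<dots> \<longleftrightarrow> (\<forall>i\<in>I. \<forall>j<nat (- (i + t)). theta_coeff (p i) j = 0)"
    unfolding negative_iff by blast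
  also have "\<dots> \<longleftrightarrow> (\<forall>i\<in>I. \<forall>m. i + int m + t < 0 \<longrightarrow> poly (p i) (of_nat m) = 0)"
    unfolding negative_iff theta_coeff_vanish_iff ..
  finally show ?thesis .
qed

text \<open>For t = -s the vanishing conditions, written with i = r + k, form the staircase of
  the theorem; indices beyond N contribute nothing since p vanishes there.\<close>
lemma staircase_condition_iff:
  fixes p :: "int \<Rightarrow> 'a::comm_ring_1 poly" and r N :: int and s :: nat
  assumes zero_above: "\<forall>j>N. p j = 0"
  shows "(\<forall>i\<in>{r..N}. \<forall>m. i + int m - int s < 0 \<longrightarrow> poly (p i) (of_nat m) = 0) \<longleftrightarrow>
         (r - int s \<ge> 0 \<or>
          (\<forall>k j. 0 \<le> k \<and> k \<le> (int s - r) - 1 \<and> 0 \<le> j \<and> j \<le> (int s - r) - 1 - k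
              \<longrightarrow> poly (p (r + k)) (of_int j) = 0))"
    (is "?vanishing \<longleftrightarrow> _ \<or> ?staircase")
proof
  assume vanishing: ?vanishing
  have ?staircase
  proof (intro allI impI)
    fix k j :: int
    assume kj: "0 \<le> k \<and> k \<le> (int s - r) - 1 \<and> 0 \<le> j \<and> j \<le> (int s - r) - 1 - k"
    show "poly (p (r + k)) (of_int j) = 0"
    proof (cases "r + k \<le> N")
      case True
      then have "poly (p (r + k)) (of_nat (nat j)) = 0"
        using vanishing kj by (auto dest!: bspec[of _ _ "r + k"] spec[of _ "nat j"])
      then show ?thesis using kj by (simp add: of_nat_nat)
    qed (use zero_above in simp)
  qed
  then show "r - int s \<ge> 0 \<or> ?staircase" ..
next
  assume "r - int s \<ge> 0 \<or> ?staircase"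
  then show ?vanishing
  proof
    assume "r - int s \<ge> 0" then show ?vanishing by auto
  next
    assume staircase: ?staircase
    show ?vanishing
    proof (intro ballI allI impI)
      fix i m assume "i \<in> {r..N}" "i + int m - int s < 0"
      then have "poly (p (r + (i - r))) (of_int (int m)) = 0"
        by (intro staircase[rule_format]) auto
      then show "poly (p i) (of_nat m) = 0" by simp
    qed
  qed
qed

text \<open>The hypotheses that P is a
  nonzero element of W[x] with p r \<noteq> 0 and r \<le> N only fix the normal form; the criterion
  does not need them.\<close>
theorem mainTheorem2:
  fixes c :: "'a::{alg_closed_field, field_char_0, field_gcd}"
    and P :: "'a wop" and p :: "int \<Rightarrow> 'a poly" and r N :: int and s :: nat
  assumes "in_Wx P" and "P \<noteq> 0"
    and "r \<le> N" and "p r \<noteq> 0" and "\<forall>j>N. p j = 0"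
    and "P = (\<Sum>i\<in>{r..N}. wmult (xc_powi c i) (wpoly_eval (p i) (theta c)))"
    and "s > 0"
  shows "in_Wx (wmult (xc_powi c (- int s)) P) \<longleftrightarrow>
           (r - int s \<ge> 0 \<or>
            (\<forall>k j. 0 \<le> k \<and> k \<le> (int s - r) - 1 \<and> 0 \<le> j \<and> j \<le> (int s - r) - 1 - k
                \<longrightarrow> poly (p (r + k)) (of_int j) = 0))"
proof -
  have "in_Wx (wmult (xc_powi c (- int s)) P)
      \<longleftrightarrow> (\<forall>i\<in>{r..N}. \<forall>m. i + int m - int s < 0 \<longrightarrow> poly (p i) (of_nat m) = 0)"
    using in_Wx_shifted_iff[of "{r..N}" c "- int s" p] by (simp add: assms(6))
  also have "\<dots> \<longleftrightarrow> (r - int s \<ge> 0 \<or>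
            (\<forall>k j. 0 \<le> k \<and> k \<le> (int s - r) - 1 \<and> 0 \<le> j \<and> j \<le> (int s - r) - 1 - k
                \<longrightarrow> poly (p (r + k)) (of_int j) = 0))"
    by (rule staircase_condition_iff) (use assms(5) in simp)
  finally show ?thesis .
qed

end
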